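(* Let $\lambda\in\Delta([2])$ be a prior over the binary state space $[2]$, let $\pi:[2]\to\Delta(\Sigma)$ be a signaling scheme with finite signal space $\Sigma$, and let $\mu$ be the distribution of posterior beliefs induced by $\pi$. Then there exist a positive integer $K$ and signaling schemes $\pi^{(1)},\dots,\pi^{(K)}$, each of the form $\pi^{(k)}:[2]\to\Delta(\{0,1\})$ (binary signal space), with induced distributions of posterior beliefs $\mu^{(k)}$, and a distribution $F$ over $[K]$, such that for every posterior belief $x\in\mathrm{supp}(\mu)$, $$\Pr[\mu=x]=\mathbb{E}_{k\sim F}\big[\Pr[\mu^{(k)}=x]\big].$$
   Context: For a signaling scheme $\pi$ with signal space $\Sigma$, when the state $\theta\sim\lambda$ and the signal $\sigma\sim\pi(\theta,\cdot)$ are drawn, the posterior belief is $x(\sigma)\in\Delta([2])$ with $x(\sigma)(i)=\lambda(i)\pi(i,\sigma)/\sum_j\lambda(j)\pi(j,\sigma)$; the induced distribution of posterior beliefs $\mu$ is the distribution of the random variable $x(\sigma)$, and $\Pr[\mu=x]$ denotes the probability that the realized posterior equals $x$. *)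

theory Defs
  imports "HOL-Probability.Probability_Mass_Function"
begin

text \<open>Binary state space [2] is modelled by the two-element type bool.\<close>

definition posterior :: "bool pmf \<Rightarrow> (bool \<Rightarrow> 's pmf) \<Rightarrow> 's \<Rightarrow> (bool \<Rightarrow> real)" where
  "posterior lam sch s =
     (\<lambda>i. pmf lam i * pmf (sch i) s / (\<Sum>j\<in>UNIV. pmf lam j * pmf (sch j) s))"

definition post_dist :: "bool pmf \<Rightarrow> (bool \<Rightarrow> 's pmf) \<Rightarrow> (bool \<Rightarrow> real) pmf" where
  "post_dist lam sch = map_pmf (posterior lam sch) (bind_pmf lam sch)"

end

theory Submission
  imports Defs
begin

text \<open>Describe a signal s by its likelihood vector q s = (pmf (sch True) s, pmf (sch False) s).
  The mass a signal contributes to a posterior x is positively homogeneous in its likelihood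
  vector, and the vectors q s add up to (1, 1). For a signal s favouring True and a signal t
  favouring False, suitable positive multiples of q s and q t add up to (1, 1), i.e. form a scheme
  with two signals inducing the posteriors of s and t. Since the total likelihood excess of the
  signals favouring True equals that of the signals favouring False, mixing these pair schemes
  with weights proportional to the excesses of s and t, plus the uninformative scheme for the
  remaining signals, reproduces every signal with its full mass.\<close>

definition positively_homogeneous :: "(('a \<Rightarrow> real) \<Rightarrow> real) \<Rightarrow> bool" where
  "positively_homogeneous f \<longleftrightarrow> (\<forall>c p. 0 \<le> c \<longrightarrow> f (\<lambda>i. c * p i) = c * f p)"

lemma positively_homogeneousD:
  "positively_homogeneous f \<Longrightarrow> 0 \<le> c \<Longrightarrow> f (\<lambda>i. c * p i) = c * f p"
  by (simp add: positively_homogeneous_def)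

lemma positively_homogeneous_zero:
  "positively_homogeneous f \<Longrightarrow> f (\<lambda>i. 0) = 0"
  using positively_homogeneousD[of f 0] by simp

lemma positively_homogeneous_const:
  assumes "positively_homogeneous f" "\<And>i. p i = c" "0 \<le> c"
  shows "f p = c * (f (\<lambda>i. 1) + f (\<lambda>i. 0))"
proof -
  have "p = (\<lambda>i. c * 1)"
    using assms(2) by auto
  then show ?thesis
    using positively_homogeneousD[OF assms(1,3), of "\<lambda>i. 1"] positively_homogeneous_zero[OF assms(1)] by simp
qed

definition signal_mass :: "'a::finite pmf \<Rightarrow> ('a \<Rightarrow> real) \<Rightarrow> real" where
  "signal_mass lam p = (\<Sum>i\<in>UNIV. pmf lam i * p i)"

definition signal_posterior :: "'a::finite pmf \<Rightarrow> ('a \<Rightarrow> real) \<Rightarrow> 'a \<Rightarrow> real" where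
  "signal_posterior lam p = (\<lambda>i. pmf lam i * p i / signal_mass lam p)"

text \<open>Here p is the likelihood vector of a single signal (p i is its probability in state i), and
  posterior_weight lam p x is the probability mass it contributes to the posterior x.\<close>

definition posterior_weight :: "'a::finite pmf \<Rightarrow> ('a \<Rightarrow> real) \<Rightarrow> ('a \<Rightarrow> real) \<Rightarrow> real" where
  "posterior_weight lam p x = (if signal_posterior lam p = x then signal_mass lam p else 0)"

lemma positively_homogeneous_posterior_weight:
  "positively_homogeneous (\<lambda>p. posterior_weight lam p x)"
  unfolding positively_homogeneous_def
proof (intro allI impI)
  fix c :: real and p
  assume "0 \<le> c"
  have mass: "signal_mass lam (\<lambda>i. c * p i) = c * signal_mass lam p"
    by (simp add: signal_mass_def sum_distrib_left algebra_simps)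
  show "posterior_weight lam (\<lambda>i. c * p i) x = c * posterior_weight lam p x"
  proof (cases "c = 0")
    case True
    then show ?thesis by (simp add: posterior_weight_def signal_mass_def)
  next
    case False
    then have "signal_posterior lam (\<lambda>i. c * p i) = signal_posterior lam p"
      by (simp add: signal_posterior_def mass)
    then show ?thesis by (simp add: posterior_weight_def mass)
  qed
qed

lemma pmf_post_dist:
  fixes lam :: "bool pmf" and sch :: "bool \<Rightarrow> 's::finite pmf"
  shows "pmf (post_dist lam sch) x = (\<Sum>\<sigma>\<in>UNIV. posterior_weight lam (\<lambda>i. pmf (sch i) \<sigma>) x)"
proof -
  have mass: "pmf (bind_pmf lam sch) \<sigma> = signal_mass lam (\<lambda>i. pmf (sch i) \<sigma>)" for \<sigma>
    by (simp add: pmf_bind integral_measure_pmf_real[where A=UNIV] signal_mass_def mult.commute)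
  have post: "posterior lam sch \<sigma> = signal_posterior lam (\<lambda>i. pmf (sch i) \<sigma>)" for \<sigma>
    by (simp add: posterior_def signal_posterior_def signal_mass_def)
  have "pmf (post_dist lam sch) x = sum (pmf (bind_pmf lam sch)) {\<sigma>. posterior lam sch \<sigma> = x}"
    by (simp add: post_dist_def pmf_map measure_measure_pmf_finite vimage_def)
  also have "\<dots> = (\<Sum>\<sigma>\<in>UNIV. if posterior lam sch \<sigma> = x then pmf (bind_pmf lam sch) \<sigma> else 0)"
    by (simp add: sum.If_cases)
  finally show ?thesis
    unfolding mass post posterior_weight_def .
qed

lemma pmf_post_dist_bernoulli:
  assumes "\<And>i. 0 \<le> u i" "\<And>i. u i \<le> 1"
  shows "pmf (post_dist lam (\<lambda>i. bernoulli_pmf (u i))) x =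
    posterior_weight lam u x + posterior_weight lam (\<lambda>i. 1 - u i) x"
  by (simp add: pmf_post_dist UNIV_bool assms)

lemma sum_positive_part_eq_sum_negative_part:
  fixes a b :: "'s \<Rightarrow> real"
  assumes "finite S" "sum a S = sum b S"
  shows "(\<Sum>s\<in>{s\<in>S. b s < a s}. a s - b s) = (\<Sum>s\<in>{s\<in>S. a s < b s}. b s - a s)"
proof -
  have "(\<Sum>s\<in>S. if b s < a s then a s - b s else 0) - (\<Sum>s\<in>S. if a s < b s then b s - a s else 0)
      = (\<Sum>s\<in>S. a s - b s)"
    unfolding sum_subtractf[symmetric] by (intro sum.cong) auto
  also have "\<dots> = 0"
    using assms(2) by (simp add: sum_subtractf)
  finally show ?thesis
    unfolding sum.inter_filter[OF assms(1)] by linarith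
qed

lemma sum_product_rebalance:
  fixes a X :: "'a \<Rightarrow> real" and b Y :: "'b \<Rightarrow> real"
  assumes "sum a A = W" "sum b B = W" "W \<noteq> 0"
  shows "(\<Sum>(s, t)\<in>A \<times> B. b t / W * X s + a s / W * Y t) = sum X A + sum Y B"
proof -
  have "(\<Sum>t\<in>B. b t / W * X s) = X s" and "(\<Sum>s\<in>A. a s / W * Y t) = Y t" for s t
    using assms by (simp_all flip: sum_distrib_right sum_divide_distrib)
  then show ?thesis
    by (simp add: sum.cartesian_product[symmetric] sum.distrib) (subst sum.swap, simp)
qed

text \<open>The binary scheme sending True with probability \<alpha> * p i has 1 - \<alpha> * p i proportional to q i,
  so its two signals behave like the signals with likelihoods p and q.\<close>

lemma binary_experiment_of_pair:
  fixes p q :: "bool \<Rightarrow> real"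
  assumes p: "p False < p True" "0 \<le> p False" and q: "q True < q False" "0 \<le> q True"
  defines "N \<equiv> p True * q False - q True * p False"
  defines "\<alpha> \<equiv> (q False - q True) / N"
  shows "0 < N" and "0 \<le> \<alpha> * p i" and "\<alpha> * p i \<le> 1"
    and "positively_homogeneous f \<Longrightarrow>
      N * (f (\<lambda>i. \<alpha> * p i) + f (\<lambda>i. 1 - \<alpha> * p i)) = (q False - q True) * f p + (p True - p False) * f q"
proof -
  have "q True * p False \<le> q False * p False"
    using p q by (intro mult_right_mono) auto
  also have "\<dots> < q False * p True"
    using p q by (intro mult_strict_left_mono) auto
  finally show N: "0 < N"
    by (simp add: N_def mult.commute)
  define \<beta> where "\<beta> = (p True - p False) / N"
  have complement: "1 - \<alpha> * p i = \<beta> * q i" for i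
    using N by (cases i) (simp_all add: \<alpha>_def \<beta>_def N_def field_simps)
  have "0 \<le> \<alpha>" "0 \<le> \<beta>"
    using N p q by (simp_all add: \<alpha>_def \<beta>_def)
  moreover have "0 \<le> p i" "0 \<le> q i"
    using p q by (cases i; simp)+
  ultimately have "0 \<le> \<alpha> * p i" "0 \<le> \<beta> * q i"
    by simp_all
  then show "0 \<le> \<alpha> * p i" "\<alpha> * p i \<le> 1"
    using complement[of i] by linarith+
  assume "positively_homogeneous f"
  then have "N * (f (\<lambda>i. \<alpha> * p i) + f (\<lambda>i. 1 - \<alpha> * p i)) = (N * \<alpha>) * f p + (N * \<beta>) * f q"
    using \<open>0 \<le> \<alpha>\<close> \<open>0 \<le> \<beta>\<close>
    by (simp add: complement positively_homogeneous_def algebra_simps)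
  also have "\<dots> = (q False - q True) * f p + (p True - p False) * f q"
    using N by (simp add: \<alpha>_def \<beta>_def)
  finally show "N * (f (\<lambda>i. \<alpha> * p i) + f (\<lambda>i. 1 - \<alpha> * p i)) = (q False - q True) * f p + (p True - p False) * f q" .
qed

lemma informative_splitting:
  fixes q :: "'s \<Rightarrow> bool \<Rightarrow> real"
  assumes "finite H" "finite L"
    and H: "\<And>s. s \<in> H \<Longrightarrow> 0 \<le> q s False \<and> q s False < q s True"
    and L: "\<And>t. t \<in> L \<Longrightarrow> 0 \<le> q t True \<and> q t True < q t False"
    and balance: "(\<Sum>s\<in>H. q s True - q s False) = (\<Sum>t\<in>L. q t False - q t True)"
  obtains w u
  where "\<And>k. k \<in> H \<times> L \<Longrightarrow> 0 \<le> w k" and "\<And>k i. k \<in> H \<times> L \<Longrightarrow> 0 \<le> u k i \<and> u k i \<le> 1"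
    and "\<And>f. positively_homogeneous f \<Longrightarrow>
      (\<Sum>k\<in>H \<times> L. w k * (f (u k) + f (\<lambda>i. 1 - u k i))) = (\<Sum>s\<in>H. f (q s)) + (\<Sum>t\<in>L. f (q t))"
proof -
  define W where "W = (\<Sum>s\<in>H. q s True - q s False)"
  define N where "N s t = q s True * q t False - q t True * q s False" for s t
  define \<alpha> where "\<alpha> s t = (q t False - q t True) / N s t" for s t
  define w where "w = (\<lambda>(s, t). N s t / W)"
  define u where "u = (\<lambda>(s, t) i. \<alpha> s t * q s i)"
  note pair = binary_experiment_of_pair[of "q s" "q t" for s t, folded N_def \<alpha>_def]
  have pair_cond: "q s False < q s True" "0 \<le> q s False" "q t True < q t False" "0 \<le> q t True"
    if "s \<in> H" "t \<in> L" for s t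
    using H[OF that(1)] L[OF that(2)] by auto
  have W_pos: "0 < W" if "s \<in> H" for s
    using that H \<open>finite H\<close> by (auto simp: W_def intro!: sum_pos)
  have L_empty: "L = {}" if "H = {}"
  proof (rule ccontr)
    assume "L \<noteq> {}"
    then have "0 < (\<Sum>t\<in>L. q t False - q t True)"
      using L \<open>finite L\<close> by (auto intro!: sum_pos)
    with that balance show False by simp
  qed
  show thesis
  proof (rule that[of w u])
    fix k i assume "k \<in> H \<times> L"
    then show "0 \<le> w k" "0 \<le> u k i \<and> u k i \<le> 1"
      using pair(1-3)[OF pair_cond] W_pos by (auto simp: w_def u_def less_imp_le)
  next
    fix f :: "(bool \<Rightarrow> real) \<Rightarrow> real"
    assume f: "positively_homogeneous f"
    have "(\<Sum>k\<in>H \<times> L. w k * (f (u k) + f (\<lambda>i. 1 - u k i)))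
        = (\<Sum>(s, t)\<in>H \<times> L. (q t False - q t True) / W * f (q s) + (q s True - q s False) / W * f (q t))"
    proof (intro sum.cong refl, clarify)
      fix s t assume "s \<in> H" "t \<in> L"
      then have "N s t * (f (\<lambda>i. \<alpha> s t * q s i) + f (\<lambda>i. 1 - \<alpha> s t * q s i))
          = (q t False - q t True) * f (q s) + (q s True - q s False) * f (q t)"
        using pair(4)[OF pair_cond f] by blast
      then show "w (s, t) * (f (u (s, t)) + f (\<lambda>i. 1 - u (s, t) i))
          = (q t False - q t True) / W * f (q s) + (q s True - q s False) / W * f (q t)"
        by (simp add: w_def u_def add_divide_distrib)
    qed
    also have "\<dots> = (\<Sum>s\<in>H. f (q s)) + (\<Sum>t\<in>L. f (q t))"
    proof (cases "H = {}")
      case False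
      then have "W \<noteq> 0"
        using W_pos by force
      with balance show ?thesis
        by (intro sum_product_rebalance) (simp_all add: W_def)
    qed (simp add: L_empty)
    finally show "(\<Sum>k\<in>H \<times> L. w k * (f (u k) + f (\<lambda>i. 1 - u k i))) = (\<Sum>s\<in>H. f (q s)) + (\<Sum>t\<in>L. f (q t))" .
  qed
qed

lemma sum_trichotomy:
  fixes a b :: "'s \<Rightarrow> 'b::linorder"
  assumes "finite S"
  shows "sum g S = sum g {s\<in>S. b s < a s} + sum g {s\<in>S. a s < b s} + sum g {s\<in>S. a s = b s}"
proof -
  have "S = {s\<in>S. b s < a s} \<union> {s\<in>S. a s < b s} \<union> {s\<in>S. a s = b s}"
    by auto
  also have "sum g \<dots> = sum g {s\<in>S. b s < a s} + sum g {s\<in>S. a s < b s} + sum g {s\<in>S. a s = b s}"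
  proof -
    have "{s\<in>S. b s < a s} \<inter> {s\<in>S. a s < b s} = {}"
      and "({s\<in>S. b s < a s} \<union> {s\<in>S. a s < b s}) \<inter> {s\<in>S. a s = b s} = {}"
      by auto
    with assms show ?thesis
      by (simp add: sum.union_disjoint)
  qed
  finally show ?thesis .
qed

text \<open>Index Inl (s, t) stands for the pair scheme of s and t, index Inr s for the uninformative
  scheme, which carries the signals s with equal likelihoods.\<close>

lemma binary_splitting:
  fixes q :: "'s::finite \<Rightarrow> bool \<Rightarrow> real"
  assumes nonneg: "\<And>s i. 0 \<le> q s i" and total: "\<And>i. (\<Sum>s\<in>UNIV. q s i) = 1"
  obtains K :: "('s \<times> 's + 's) set" and w u
  where "\<And>k. k \<in> K \<Longrightarrow> 0 \<le> w k" and "\<And>k i. k \<in> K \<Longrightarrow> 0 \<le> u k i \<and> u k i \<le> 1"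
    and "\<And>f. positively_homogeneous f \<Longrightarrow>
      (\<Sum>s\<in>UNIV. f (q s)) = (\<Sum>k\<in>K. w k * (f (u k) + f (\<lambda>i. 1 - u k i)))"
proof -
  define H where "H = {s. q s False < q s True}"
  define L where "L = {s. q s True < q s False}"
  define E where "E = {s. q s True = q s False}"
  have balance: "(\<Sum>s\<in>H. q s True - q s False) = (\<Sum>t\<in>L. q t False - q t True)"
    using sum_positive_part_eq_sum_negative_part[of UNIV "\<lambda>s. q s True" "\<lambda>s. q s False"]
    by (simp add: H_def L_def total)
  have "0 \<le> q s False \<and> q s False < q s True" if "s \<in> H" for s
    using that nonneg by (simp add: H_def)
  moreover have "0 \<le> q t True \<and> q t True < q t False" if "t \<in> L" for t
    using that nonneg by (simp add: L_def)
  ultimately obtain w :: "'s \<times> 's \<Rightarrow> real" and u :: "'s \<times> 's \<Rightarrow> bool \<Rightarrow> real"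
    where w: "\<And>k. k \<in> H \<times> L \<Longrightarrow> 0 \<le> w k" and u: "\<And>k i. k \<in> H \<times> L \<Longrightarrow> 0 \<le> u k i \<and> u k i \<le> 1"
      and pairs: "\<And>f. positively_homogeneous f \<Longrightarrow>
        (\<Sum>k\<in>H \<times> L. w k * (f (u k) + f (\<lambda>i. 1 - u k i))) = (\<Sum>s\<in>H. f (q s)) + (\<Sum>t\<in>L. f (q t))"
    using informative_splitting[of H L q, OF finite finite _ _ balance] by blast
  define weight where "weight = case_sum w (\<lambda>s. q s True)"
  define p_true :: "'s \<times> 's + 's \<Rightarrow> bool \<Rightarrow> real" where "p_true = case_sum u (\<lambda>s i. 1)"
  show thesis
  proof (rule that[of "H \<times> L <+> E" weight p_true])
    fix k i assume "k \<in> H \<times> L <+> E"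
    then show "0 \<le> weight k" "0 \<le> p_true k i \<and> p_true k i \<le> 1"
      using w u nonneg by (auto simp: weight_def p_true_def)
  next
    fix f :: "(bool \<Rightarrow> real) \<Rightarrow> real"
    assume f: "positively_homogeneous f"
    have singles: "f (q s) = q s True * (f (\<lambda>i. 1) + f (\<lambda>i. 0))" if "s \<in> E" for s
    proof (rule positively_homogeneous_const[OF f _ nonneg])
      show "q s i = q s True" for i
        using that by (cases i) (simp_all add: E_def)
    qed
    have "(\<Sum>s\<in>UNIV. f (q s)) = (\<Sum>s\<in>H. f (q s)) + (\<Sum>s\<in>L. f (q s)) + (\<Sum>s\<in>E. f (q s))"
      using sum_trichotomy[where S=UNIV and a="\<lambda>s. q s True" and b="\<lambda>s. q s False"]
      by (simp add: H_def L_def E_def)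
    also have "\<dots> = (\<Sum>k\<in>H \<times> L <+> E. weight k * (f (p_true k) + f (\<lambda>i. 1 - p_true k i)))"
      using pairs[OF f] singles by (simp add: sum.Plus weight_def p_true_def)
    finally show "(\<Sum>s\<in>UNIV. f (q s)) = (\<Sum>k\<in>H \<times> L <+> E. weight k * (f (p_true k) + f (\<lambda>i. 1 - p_true k i)))" .
  qed
qed

lemma finite_mixture_as_nat_pmf:
  fixes w :: "'k::countable \<Rightarrow> real"
  assumes "finite K" and nonneg: "\<And>k. k \<in> K \<Longrightarrow> 0 \<le> w k" and total: "sum w K = 1"
  obtains n :: nat and F :: "nat pmf" and idx :: "nat \<Rightarrow> 'k"
  where "0 < n" and "set_pmf F \<subseteq> {1..n}"
    and "\<And>g. measure_pmf.expectation F (\<lambda>j. g (idx j)) = (\<Sum>k\<in>K. w k * g k)"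
proof -
  define v where "v k = (if k \<in> K then w k else 0)" for k
  have "(\<integral>\<^sup>+k. ennreal (v k) \<partial>count_space UNIV) = ennreal (\<Sum>k\<in>K. v k)"
    using \<open>finite K\<close> nonneg by (subst nn_integral_count_space') (auto simp: v_def sum_ennreal)
  also have "\<dots> = 1"
    using total by (simp add: v_def)
  finally have G: "pmf (embed_pmf v) k = v k" for k
    using nonneg by (intro pmf_embed_pmf) (auto simp: v_def)
  define enc where "enc k = to_nat k + 1" for k :: 'k
  define n where "n = Max (enc ` K)"
  have "K \<noteq> {}"
    using total by auto
  then have enc_range: "enc k \<in> {1..n}" if "k \<in> K" for k
    using that \<open>finite K\<close> by (auto simp: n_def enc_def)
  have set_G: "set_pmf (embed_pmf v) \<subseteq> K"
    by (auto simp: set_pmf_eq G v_def split: if_splits)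
  show thesis
  proof
    show "0 < n"
      using enc_range \<open>K \<noteq> {}\<close> by fastforce
    show "set_pmf (map_pmf enc (embed_pmf v)) \<subseteq> {1..n}"
      using enc_range set_G by auto
    fix g :: "'k \<Rightarrow> real"
    have "measure_pmf.expectation (map_pmf enc (embed_pmf v)) (\<lambda>j. g (from_nat (j - 1)))
        = measure_pmf.expectation (embed_pmf v) g"
      by (simp add: enc_def)
    also have "\<dots> = (\<Sum>k\<in>K. g k * pmf (embed_pmf v) k)"
      using \<open>finite K\<close> set_G by (intro integral_measure_pmf_real) auto
    finally show "measure_pmf.expectation (map_pmf enc (embed_pmf v)) (\<lambda>j. g (from_nat (j - 1)))
        = (\<Sum>k\<in>K. w k * g k)"
      by (simp add: G v_def mult.commute)
  qed
qed

lemma post_dist_mixture_of_binary: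
  fixes lam :: "bool pmf" and sch :: "bool \<Rightarrow> 's::finite pmf"
  obtains K :: "('s \<times> 's + 's) set" and w u
  where "\<And>k. k \<in> K \<Longrightarrow> 0 \<le> w k" and "sum w K = 1"
    and "\<And>x. pmf (post_dist lam sch) x = (\<Sum>k\<in>K. w k * pmf (post_dist lam (\<lambda>i. bernoulli_pmf (u k i))) x)"
proof -
  define q where "q s = (\<lambda>i. pmf (sch i) s)" for s
  have q_nonneg: "0 \<le> q s i" and q_total: "(\<Sum>s\<in>UNIV. q s i) = 1" for s i
    by (simp_all add: q_def sum_pmf_eq_1)
  obtain K :: "('s \<times> 's + 's) set" and w :: "'s \<times> 's + 's \<Rightarrow> real"
    and u :: "'s \<times> 's + 's \<Rightarrow> bool \<Rightarrow> real" where w: "\<And>k. k \<in> K \<Longrightarrow> 0 \<le> w k"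
    and u: "\<And>k i. k \<in> K \<Longrightarrow> 0 \<le> u k i \<and> u k i \<le> 1"
    and split: "\<And>f. positively_homogeneous f \<Longrightarrow>
      (\<Sum>s\<in>UNIV. f (q s)) = (\<Sum>k\<in>K. w k * (f (u k) + f (\<lambda>i. 1 - u k i)))"
    using binary_splitting[of q, OF q_nonneg q_total] by blast
  show thesis
  proof
    show "0 \<le> w k" if "k \<in> K" for k
      using that by (rule w)
    \<comment> \<open>Test the splitting identity against the total likelihood, which is linear.\<close>
    have "positively_homogeneous (\<lambda>p. p True + p False)"
      by (simp add: positively_homogeneous_def algebra_simps)
    from split[OF this] show "sum w K = 1"
      using q_total by (simp add: sum.distrib flip: sum_distrib_left sum_distrib_right)
    fix x
    have "pmf (post_dist lam sch) x = (\<Sum>s\<in>UNIV. posterior_weight lam (q s) x)"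
      by (simp add: pmf_post_dist q_def)
    also have "\<dots> = (\<Sum>k\<in>K. w k * (posterior_weight lam (u k) x + posterior_weight lam (\<lambda>i. 1 - u k i) x))"
      by (rule split[OF positively_homogeneous_posterior_weight])
    also have "\<dots> = (\<Sum>k\<in>K. w k * pmf (post_dist lam (\<lambda>i. bernoulli_pmf (u k i))) x)"
      using u by (intro sum.cong refl) (simp add: pmf_post_dist_bernoulli)
    finally show "pmf (post_dist lam sch) x = (\<Sum>k\<in>K. w k * pmf (post_dist lam (\<lambda>i. bernoulli_pmf (u k i))) x)" .
  qed
qed

theorem mainTheorem7:
  fixes lam :: "bool pmf" and sch :: "bool \<Rightarrow> ('s::finite) pmf"
  shows "\<exists>K::nat. K > 0 \<and>
    (\<exists>(schs :: nat \<Rightarrow> bool \<Rightarrow> bool pmf) (F :: nat pmf).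
       set_pmf F \<subseteq> {1..K} \<and>
       (\<forall>x \<in> set_pmf (post_dist lam sch).
          pmf (post_dist lam sch) x =
          measure_pmf.expectation F (\<lambda>k. pmf (post_dist lam (schs k)) x)))"
proof -
  obtain K :: "('s \<times> 's + 's) set" and w :: "'s \<times> 's + 's \<Rightarrow> real"
    and u :: "'s \<times> 's + 's \<Rightarrow> bool \<Rightarrow> real"
    where w_nonneg: "\<And>k. k \<in> K \<Longrightarrow> 0 \<le> w k" and w_sum: "sum w K = 1"
    and mixture: "\<And>x. pmf (post_dist lam sch) x = (\<Sum>k\<in>K. w k * pmf (post_dist lam (\<lambda>i. bernoulli_pmf (u k i))) x)"
    using post_dist_mixture_of_binary[of lam sch] by blast
  obtain n :: nat and F :: "nat pmf" and idx :: "nat \<Rightarrow> 's \<times> 's + 's" where "0 < n" "set_pmf F \<subseteq> {1..n}"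
    and F: "\<And>g. measure_pmf.expectation F (\<lambda>j. g (idx j)) = (\<Sum>k\<in>K. w k * g k)"
    using finite_mixture_as_nat_pmf[OF finite w_nonneg w_sum] by blast
  show ?thesis
  proof (intro exI conjI ballI)
    show "0 < n" "set_pmf F \<subseteq> {1..n}" by fact+
    show "pmf (post_dist lam sch) x
        = measure_pmf.expectation F (\<lambda>j. pmf (post_dist lam (\<lambda>i. bernoulli_pmf (u (idx j) i))) x)" for x
      using F[of "\<lambda>k. pmf (post_dist lam (\<lambda>i. bernoulli_pmf (u k i))) x"] by (simp add: mixture)
  qed
qed

end
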